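(* Let $X$ be a Banach space and $\alpha$ a left tensorial norm on $c_0\otimes X$. Then there exists a unique left tensorial norm $\tilde\alpha$ on $\ell_\infty\otimes X$ whose restriction to $c_0\otimes X$ (with $c_0$ regarded canonically as a subspace of $\ell_\infty$) equals $\alpha$.
   Context: A norm $\alpha$ on $Y\otimes X$ ($Y,X$ Banach spaces) is left tensorial if $\alpha(y\otimes x)=\|y\|\|x\|$ for all $y,x$ and for every bounded operator $T\colon Y\to Y$, $T\otimes I_X$ is bounded on $(Y\otimes X,\alpha)$ with $\|T\otimes I_X\|\le\|T\|$. *)

theory Defs
  imports "HOL-Analysis.Analysis"
begin

text \<open>ell_infinity is the Banach space of bounded (continuous, nat being discrete)
  real sequences with the sup norm; c_0 is its subspace of null sequences.\<close>

type_synonym linf = "nat \<Rightarrow>\<^sub>C real"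

definition c0 :: "linf set" where
  "c0 = {y. (\<lambda>n. apply_bcontfun y n) \<longlonglongrightarrow> 0}"

text \<open>Elementary tensor y \<otimes> x, realised as the X-valued sequence n \<mapsto> y(n) x.
  The algebraic tensor product ell_infinity \<otimes> X is identified with the span of
  these sequences (this is the canonical injective realisation), and c_0 \<otimes> X with
  the span of those with y \<in> c_0.\<close>

definition tp :: "linf \<Rightarrow> 'x::real_normed_vector \<Rightarrow> (nat \<Rightarrow>\<^sub>C 'x)" where
  "tp y x = Bcontfun (\<lambda>n. apply_bcontfun y n *\<^sub>R x)"

definition linf_tensor :: "(nat \<Rightarrow>\<^sub>C 'x::real_normed_vector) set" where
  "linf_tensor = span {tp y x | y x. True}"

definition c0_tensor :: "(nat \<Rightarrow>\<^sub>C 'x::real_normed_vector) set" where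
  "c0_tensor = span {tp y x | y x. y \<in> c0}"

definition is_norm_on :: "'v::real_vector set \<Rightarrow> ('v \<Rightarrow> real) \<Rightarrow> bool" where
  "is_norm_on V N \<longleftrightarrow>
     (\<forall>u\<in>V. N u \<ge> 0 \<and> (N u = 0 \<longleftrightarrow> u = 0)) \<and>
     (\<forall>u\<in>V. \<forall>c. N (c *\<^sub>R u) = \<bar>c\<bar> * N u) \<and>
     (\<forall>u\<in>V. \<forall>v\<in>V. N (u + v) \<le> N u + N v)"

definition bounded_op_c0 :: "(linf \<Rightarrow> linf) \<Rightarrow> bool" where
  "bounded_op_c0 T \<longleftrightarrow>
     T ` c0 \<subseteq> c0 \<and>
     (\<forall>a\<in>c0. \<forall>b\<in>c0. T (a + b) = T a + T b) \<and>
     (\<forall>a\<in>c0. \<forall>c. T (c *\<^sub>R a) = c *\<^sub>R T a) \<and>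
     (\<exists>K. \<forall>a\<in>c0. norm (T a) \<le> K * norm a)"

definition c0_opnorm :: "(linf \<Rightarrow> linf) \<Rightarrow> real" where
  "c0_opnorm T = (SUP a\<in>c0. norm (T a) / norm a)"

text \<open>Left tensorial norm on c_0 \<otimes> X. The operator T \<otimes> I_X acts on a tensor
  \<Sum> y_i \<otimes> x_i as \<Sum> T y_i \<otimes> x_i; the condition is written on representatives.\<close>
definition left_tensorial_c0 :: "((nat \<Rightarrow>\<^sub>C 'x::real_normed_vector) \<Rightarrow> real) \<Rightarrow> bool" where
  "left_tensorial_c0 \<alpha> \<longleftrightarrow>
     is_norm_on c0_tensor \<alpha> \<and>
     (\<forall>y\<in>c0. \<forall>x. \<alpha> (tp y x) = norm y * norm x) \<and>
     (\<forall>T. bounded_op_c0 T \<longrightarrow>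
        (\<forall>(n::nat) (ys::nat \<Rightarrow> linf) (xs::nat \<Rightarrow> 'x). (\<forall>i<n. ys i \<in> c0) \<longrightarrow>
           \<alpha> (\<Sum>i<n. tp (T (ys i)) (xs i)) \<le> c0_opnorm T * \<alpha> (\<Sum>i<n. tp (ys i) (xs i))))"

definition left_tensorial_linf :: "((nat \<Rightarrow>\<^sub>C 'x::real_normed_vector) \<Rightarrow> real) \<Rightarrow> bool" where
  "left_tensorial_linf \<alpha> \<longleftrightarrow>
     is_norm_on linf_tensor \<alpha> \<and>
     (\<forall>y x. \<alpha> (tp y x) = norm y * norm x) \<and>
     (\<forall>T::linf \<Rightarrow>\<^sub>L linf.
        (\<forall>(n::nat) (ys::nat \<Rightarrow> linf) (xs::nat \<Rightarrow> 'x).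
           \<alpha> (\<Sum>i<n. tp (blinfun_apply T (ys i)) (xs i)) \<le> norm T * \<alpha> (\<Sum>i<n. tp (ys i) (xs i))))"

end

theory Submission
  imports Defs
begin

text \<open>Write P_N for truncation to the first N coordinates and put
  \<beta> u = sup_N \<alpha> (P_N u). Every left tensorial extension \<gamma> of \<alpha> satisfies
  \<gamma> (P_N u) \<le> \<gamma> u, and P_N u lies in c_0 \<otimes> X, so \<beta> \<le> \<gamma>.
  Conversely, let u = \<Sum> y_i \<otimes> x_i and \<delta> > 0. Quantising the values of the finitely many
  bounded sequences y_i splits the indices into finitely many cells on which every y_i varies
  by less than \<delta>. If c sends each index to a fixed representative of its cell, then y_i \<circ> c
  is \<delta>-close to y_i, and y_i \<circ> c = (P_m y_i) \<circ> c for some m. Composition with c is a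
  contraction, so \<gamma> u \<le> \<alpha> (P_m u) + \<delta> \<Sum> norm x_i \<le> \<beta> u + \<delta> \<Sum> norm x_i.
  The same approximation shows that \<beta> is left tensorial: the operator P_N T (- \<circ> c) maps
  into c_0 and has norm at most norm T. Finally, \<beta> agrees with \<alpha> on c_0 \<otimes> X because
  P_N y \<longrightarrow> y for y in c_0.\<close>

lemma le_of_forall_pos_le_add_mult:
  fixes a b C :: real
  assumes "\<And>\<delta>. \<delta> > 0 \<Longrightarrow> a \<le> b + \<delta> * C"
  shows "a \<le> b"
proof (rule field_le_epsilon)
  fix e :: real
  assume "e > 0"
  then have "e / (\<bar>C\<bar> + 1) * C \<le> e / (\<bar>C\<bar> + 1) * (\<bar>C\<bar> + 1)"
    by (intro mult_left_mono) auto
  also have "\<dots> = e"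
    by simp
  finally have "e / (\<bar>C\<bar> + 1) * C \<le> e" .
  moreover have "a \<le> b + e / (\<bar>C\<bar> + 1) * C"
    using \<open>e > 0\<close> by (intro assms) simp
  ultimately show "a \<le> b + e" by simp
qed

lemma abs_diff_less_of_floor_divide_eq:
  fixes a b \<delta> :: real
  assumes "\<delta> > 0" "\<lfloor>a / \<delta>\<rfloor> = \<lfloor>b / \<delta>\<rfloor>"
  shows "\<bar>a - b\<bar> < \<delta>"
proof -
  have "\<bar>a / \<delta> - b / \<delta>\<bar> < 1"
    using assms(2) by linarith
  then show ?thesis
    using assms(1) by (simp add: diff_divide_distrib[symmetric])
qed

lemma finite_range_representatives:
  fixes g :: "nat \<Rightarrow> 'a"
  assumes "finite (range g)"
  obtains c m where "\<And>n. c n < m" "\<And>n. g (c n) = g n"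
proof -
  define c where "c n = (SOME k. g k = g n)" for n
  have "range c \<subseteq> (\<lambda>v. SOME k. g k = v) ` range g"
    unfolding c_def by auto
  then have "finite (range c)"
    using assms finite_subset by blast
  then obtain m where "range c \<subseteq> {..<m}"
    using finite_nat_bounded by blast
  moreover have "g (c n) = g n" for n
    unfolding c_def by (rule someI) (rule refl)
  ultimately show ?thesis using that by blast
qed

lemma bcontfun_nat_bounded:
  fixes f :: "nat \<Rightarrow> 'a::real_normed_vector"
  assumes "\<And>n. norm (f n) \<le> b"
  shows "f \<in> bcontfun"
  by (rule bcontfun_normI) (auto intro: assms)

lemma tp_apply [simp]: "apply_bcontfun (tp y x) n = apply_bcontfun y n *\<^sub>R x"
proof -
  have "norm (apply_bcontfun y n *\<^sub>R x) \<le> norm y * norm x" for n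
    using norm_bounded[of y n] by (simp add: mult_right_mono)
  then have "(\<lambda>n. apply_bcontfun y n *\<^sub>R x) \<in> bcontfun"
    by (rule bcontfun_nat_bounded)
  then show ?thesis
    unfolding tp_def by (simp add: Bcontfun_inverse)
qed

lemma tp_diff_left: "tp (y - z) x = tp y x - tp z x"
  by (rule bcontfun_eqI) (simp add: scaleR_diff_left)

lemma tp_scaleR_left: "tp (c *\<^sub>R y) x = c *\<^sub>R tp y x"
  by (rule bcontfun_eqI) simp

lemma sum_tp_diff_left:
  "(\<Sum>i\<in>I. tp (ys i) (xs i)) - (\<Sum>i\<in>I. tp (zs i) (xs i)) = (\<Sum>i\<in>I. tp (ys i - zs i) (xs i))"
  by (simp add: tp_diff_left sum_subtractf)

definition trunc :: "nat \<Rightarrow> (nat \<Rightarrow>\<^sub>C 'a::real_normed_vector) \<Rightarrow> (nat \<Rightarrow>\<^sub>C 'a)" where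
  "trunc N u = Bcontfun (\<lambda>n. if n < N then apply_bcontfun u n else 0)"

definition reindex :: "(nat \<Rightarrow> nat) \<Rightarrow> (nat \<Rightarrow>\<^sub>C 'a::real_normed_vector) \<Rightarrow> (nat \<Rightarrow>\<^sub>C 'a)" where
  "reindex c u = Bcontfun (\<lambda>n. apply_bcontfun u (c n))"

lemma trunc_apply [simp]: "apply_bcontfun (trunc N u) n = (if n < N then apply_bcontfun u n else 0)"
  unfolding trunc_def by (simp add: Bcontfun_inverse bcontfun_nat_bounded[where b="norm u"] norm_bounded)

lemma reindex_apply [simp]: "apply_bcontfun (reindex c u) n = apply_bcontfun u (c n)"
  unfolding reindex_def by (simp add: Bcontfun_inverse bcontfun_nat_bounded[where b="norm u"] norm_bounded)

lemma norm_trunc_le: "norm (trunc N u) \<le> norm u"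
  by (rule norm_bound) (simp add: norm_bounded)

lemma norm_reindex_le: "norm (reindex c u) \<le> norm u"
  by (rule norm_bound) (simp add: norm_bounded)

lemma trunc_add: "trunc N (u + v) = trunc N u + trunc N v"
  by (rule bcontfun_eqI) simp

lemma trunc_scaleR: "trunc N (c *\<^sub>R u) = c *\<^sub>R trunc N u"
  by (rule bcontfun_eqI) simp

lemma trunc_0_left: "trunc 0 u = 0"
  by (rule bcontfun_eqI) simp

lemma trunc_zero: "trunc N 0 = 0"
  by (rule bcontfun_eqI) simp

lemma bounded_linear_trunc: "bounded_linear (trunc N)"
  by (rule bounded_linear_intro[where K=1]) (simp_all add: trunc_add trunc_scaleR norm_trunc_le)

lemma bounded_linear_reindex: "bounded_linear (reindex c)"
  by (rule bounded_linear_intro[where K=1]) (auto intro: bcontfun_eqI simp: norm_reindex_le)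

lemma trunc_tp: "trunc N (tp y x) = tp (trunc N y) x"
  by (rule bcontfun_eqI) simp

lemma trunc_sum_tp: "trunc N (\<Sum>i\<in>I. tp (ys i) (xs i)) = (\<Sum>i\<in>I. tp (trunc N (ys i)) (xs i))"
  by (simp add: linear_sum[OF bounded_linear.linear[OF bounded_linear_trunc]] trunc_tp)

lemma reindex_trunc: "(\<And>n. c n < m) \<Longrightarrow> reindex c (trunc m u) = reindex c u"
  by (rule bcontfun_eqI) simp

lemma trunc_in_c0: "trunc N y \<in> c0"
proof -
  have "eventually (\<lambda>n. apply_bcontfun (trunc N y) n = 0) sequentially"
    by (rule eventually_sequentiallyI[of N]) simp
  then show ?thesis unfolding c0_def by (simp add: tendsto_eventually)
qed

lemma subspace_c0: "subspace c0"
  unfolding subspace_def c0_def by (auto intro: tendsto_add_zero tendsto_mult_right_zero)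

lemma c0_eventually_trunc_close:
  assumes "y \<in> c0" "\<delta> > 0"
  shows "eventually (\<lambda>N. norm (y - trunc N y) \<le> \<delta>) sequentially"
proof -
  obtain N0 where "\<forall>n\<ge>N0. \<bar>apply_bcontfun y n\<bar> < \<delta>"
    using LIMSEQ_D[OF assms(1)[unfolded c0_def, simplified] assms(2)] by auto
  then have "norm (y - trunc N y) \<le> \<delta>" if "N \<ge> N0" for N
    by (intro norm_bound) (use that assms(2) in \<open>auto simp: less_imp_le\<close>)
  then show ?thesis by (auto simp: eventually_sequentially)
qed

lemma reindex_approximation:
  fixes ys :: "nat \<Rightarrow> linf"
  assumes "\<delta> > 0"
  obtains c m where "\<And>n. c n < m" "\<And>i. i < k \<Longrightarrow> norm (ys i - reindex c (ys i)) \<le> \<delta>"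
proof -
  define g where "g n = map (\<lambda>i. \<lfloor>apply_bcontfun (ys i) n / \<delta>\<rfloor>) [0..<k]" for n
  define F where "F = (\<Union>i<k. {\<lfloor>- norm (ys i) / \<delta>\<rfloor>..\<lfloor>norm (ys i) / \<delta>\<rfloor>})"
  have "\<lfloor>apply_bcontfun (ys i) n / \<delta>\<rfloor> \<in> F" if "i < k" for i n
  proof -
    have "\<bar>apply_bcontfun (ys i) n\<bar> \<le> norm (ys i)"
      using norm_bounded[of "ys i" n] by simp
    then have "- norm (ys i) / \<delta> \<le> apply_bcontfun (ys i) n / \<delta>"
      "apply_bcontfun (ys i) n / \<delta> \<le> norm (ys i) / \<delta>"
      using assms by (simp_all add: abs_le_iff le_divide_eq divide_le_eq)
    then show ?thesis
      unfolding F_def using that by (auto intro: floor_mono)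
  qed
  then have "range g \<subseteq> {zs. set zs \<subseteq> F \<and> length zs = k}"
    unfolding g_def by auto
  moreover have "finite F"
    unfolding F_def by simp
  ultimately have "finite (range g)"
    using finite_lists_length_eq finite_subset by blast
  then obtain c m where c_less: "\<And>n. c n < m" and g_c: "\<And>n. g (c n) = g n"
    using finite_range_representatives by metis
  have "norm (ys i - reindex c (ys i)) \<le> \<delta>" if "i < k" for i
  proof (rule norm_bound)
    fix n
    have "\<lfloor>apply_bcontfun (ys i) n / \<delta>\<rfloor> = \<lfloor>apply_bcontfun (ys i) (c n) / \<delta>\<rfloor>"
      using arg_cong[OF g_c[of n], of "\<lambda>zs. zs ! i"] that by (simp add: g_def)
    then show "norm (apply_bcontfun (ys i - reindex c (ys i)) n) \<le> \<delta>"
      using abs_diff_less_of_floor_divide_eq[OF assms] by (simp add: less_imp_le)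
  qed
  with c_less show ?thesis
    using that by blast
qed

definition tensor_span :: "linf set \<Rightarrow> (nat \<Rightarrow>\<^sub>C 'x::real_normed_vector) set" where
  "tensor_span S = span {tp y x | y x. y \<in> S}"

lemma c0_tensor_eq: "c0_tensor = tensor_span c0"
  by (simp add: c0_tensor_def tensor_span_def)

lemma linf_tensor_eq: "linf_tensor = tensor_span UNIV"
  by (simp add: linf_tensor_def tensor_span_def)

lemma subspace_tensor_span: "subspace (tensor_span S)"
  unfolding tensor_span_def by (rule subspace_span)

lemma tp_in_tensor_span: "y \<in> S \<Longrightarrow> tp y x \<in> tensor_span S"
  unfolding tensor_span_def by (auto intro: span_base)

lemma sum_tp_in_tensor_span:
  "(\<And>i. i \<in> I \<Longrightarrow> ys i \<in> S) \<Longrightarrow> (\<Sum>i\<in>I. tp (ys i) (xs i)) \<in> tensor_span S"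
  by (intro subspace_sum[OF subspace_tensor_span] tp_in_tensor_span)

lemma tensor_span_obtain_sum_tp:
  assumes "subspace S" "u \<in> tensor_span S"
  obtains n :: nat and ys xs where "\<And>i. i < n \<Longrightarrow> ys i \<in> S" "u = (\<Sum>i<n. tp (ys i) (xs i))"
proof -
  have "\<exists>(n::nat) ys xs. (\<forall>i<n. ys i \<in> S) \<and> u = (\<Sum>i<n. tp (ys i) (xs i))"
    using assms(2) unfolding tensor_span_def
  proof (induction rule: span_induct_alt)
    case base
    show ?case by (intro exI[where x="0::nat"]) simp
  next
    case (step c z w)
    from step(1) obtain y x where "y \<in> S" "z = tp y x" by auto
    moreover from step(2) obtain n :: nat and ys xs
      where "\<forall>i<n. ys i \<in> S" "w = (\<Sum>i<n. tp (ys i) (xs i))" by blast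
    ultimately have "\<forall>i<Suc n. (ys(n := c *\<^sub>R y)) i \<in> S"
        "c *\<^sub>R z + w = (\<Sum>i<Suc n. tp ((ys(n := c *\<^sub>R y)) i) ((xs(n := x)) i))"
      using subspace_scale[OF assms(1)] by (auto simp: less_Suc_eq tp_scaleR_left)
    then show ?case by blast
  qed
  then show ?thesis using that by blast
qed

lemma sum_tp_in_linf_tensor: "(\<Sum>i\<in>I. tp (ys i) (xs i)) \<in> linf_tensor"
  by (simp add: linf_tensor_eq sum_tp_in_tensor_span)

lemma linf_tensor_obtain_sum_tp:
  assumes "u \<in> linf_tensor"
  obtains n :: nat and ys xs where "u = (\<Sum>i<n. tp (ys i) (xs i))"
  using tensor_span_obtain_sum_tp[OF subspace_UNIV] assms linf_tensor_eq by metis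

lemma trunc_in_c0_tensor:
  assumes "u \<in> linf_tensor"
  shows "trunc N u \<in> c0_tensor"
proof -
  obtain n :: nat and ys xs where "u = (\<Sum>i<n. tp (ys i) (xs i))"
    using linf_tensor_obtain_sum_tp[OF assms] .
  then show ?thesis
    by (simp add: trunc_sum_tp c0_tensor_eq sum_tp_in_tensor_span trunc_in_c0)
qed

lemma is_norm_onD:
  assumes "is_norm_on V N"
  shows "u \<in> V \<Longrightarrow> N u \<ge> 0" "u \<in> V \<Longrightarrow> N u = 0 \<longleftrightarrow> u = 0"
    "u \<in> V \<Longrightarrow> N (c *\<^sub>R u) = \<bar>c\<bar> * N u" "u \<in> V \<Longrightarrow> v \<in> V \<Longrightarrow> N (u + v) \<le> N u + N v"
  using assms unfolding is_norm_on_def by auto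

lemma is_norm_on_zero: "is_norm_on V N \<Longrightarrow> subspace V \<Longrightarrow> N 0 = 0"
  using is_norm_onD(2) subspace_0 by blast

lemma is_norm_on_sum_le:
  assumes "is_norm_on V N" "subspace V" "finite I" "\<And>i. i \<in> I \<Longrightarrow> f i \<in> V"
  shows "N (\<Sum>i\<in>I. f i) \<le> (\<Sum>i\<in>I. N (f i))"
  using assms(3,4)
proof (induction I rule: finite_induct)
  case empty
  then show ?case using is_norm_on_zero[OF assms(1,2)] by simp
next
  case (insert i I)
  then have "N (\<Sum>j\<in>insert i I. f j) \<le> N (f i) + N (\<Sum>j\<in>I. f j)"
    by (simp add: is_norm_onD(4)[OF assms(1)] subspace_sum[OF assms(2)])
  with insert show ?case by simp
qed

lemma is_norm_on_le_add_diff: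
  assumes "is_norm_on V N" "subspace V" "u \<in> V" "v \<in> V"
  shows "N u \<le> N v + N (u - v)"
  using is_norm_onD(4)[OF assms(1) assms(4) subspace_diff[OF assms(2,3,4)]] by simp

lemma is_norm_on_sum_tp_le:
  fixes n :: nat
  assumes "is_norm_on (tensor_span S) N" "\<And>y x. y \<in> S \<Longrightarrow> N (tp y x) = norm y * norm x"
    "\<And>i. i < n \<Longrightarrow> ys i \<in> S" "\<And>i. i < n \<Longrightarrow> norm (ys i) \<le> d"
  shows "N (\<Sum>i<n. tp (ys i) (xs i)) \<le> d * (\<Sum>i<n. norm (xs i))"
proof -
  have "N (\<Sum>i<n. tp (ys i) (xs i)) \<le> (\<Sum>i<n. N (tp (ys i) (xs i)))"
    using assms(3)
    by (intro is_norm_on_sum_le[OF assms(1) subspace_tensor_span]) (auto intro: tp_in_tensor_span)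
  also have "\<dots> \<le> (\<Sum>i<n. d * norm (xs i))"
    using assms(2-4) by (intro sum_mono) (simp add: mult_right_mono)
  finally show ?thesis by (simp add: sum_distrib_left)
qed

lemma is_norm_on_sum_tp_perturb:
  fixes n :: nat
  assumes "subspace S" "is_norm_on (tensor_span S) N"
    "\<And>y x. y \<in> S \<Longrightarrow> N (tp y x) = norm y * norm x"
    "\<And>i. i < n \<Longrightarrow> ys i \<in> S" "\<And>i. i < n \<Longrightarrow> zs i \<in> S"
    "\<And>i. i < n \<Longrightarrow> norm (ys i - zs i) \<le> \<delta>"
  shows "N (\<Sum>i<n. tp (ys i) (xs i)) \<le> N (\<Sum>i<n. tp (zs i) (xs i)) + \<delta> * (\<Sum>i<n. norm (xs i))"
proof -
  have "N (\<Sum>i<n. tp (ys i) (xs i))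
      \<le> N (\<Sum>i<n. tp (zs i) (xs i)) + N ((\<Sum>i<n. tp (ys i) (xs i)) - (\<Sum>i<n. tp (zs i) (xs i)))"
    by (rule is_norm_on_le_add_diff[OF assms(2) subspace_tensor_span])
      (auto intro: sum_tp_in_tensor_span assms(4,5))
  also have "(\<Sum>i<n. tp (ys i) (xs i)) - (\<Sum>i<n. tp (zs i) (xs i)) = (\<Sum>i<n. tp (ys i - zs i) (xs i))"
    by (rule sum_tp_diff_left)
  also have "N (\<Sum>i<n. tp (ys i - zs i) (xs i)) \<le> \<delta> * (\<Sum>i<n. norm (xs i))"
    by (rule is_norm_on_sum_tp_le[OF assms(2,3)]) (simp_all add: assms(4-6) subspace_diff[OF assms(1)])
  finally show ?thesis by simp
qed

lemma c0_opnorm_le: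
  assumes "\<And>y. y \<in> c0 \<Longrightarrow> norm (T y) \<le> K * norm y" "0 \<le> K"
  shows "c0_opnorm T \<le> K"
  unfolding c0_opnorm_def
proof (rule cSUP_least)
  show "c0 \<noteq> {}"
    using subspace_0[OF subspace_c0] by blast
  show "norm (T y) / norm y \<le> K" if "y \<in> c0" for y
    using assms that by (cases "y = 0") (simp_all add: divide_le_eq)
qed

lemma bounded_op_c0I:
  assumes "bounded_linear T" "T ` c0 \<subseteq> c0"
  shows "bounded_op_c0 T"
proof -
  interpret T: bounded_linear T by fact
  obtain K where "\<And>y. norm (T y) \<le> norm y * K"
    using T.bounded by blast
  then show ?thesis
    unfolding bounded_op_c0_def using assms(2) T.add T.scale by (metis mult.commute)
qed

lemma left_tensorial_c0D:
  fixes n :: nat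
  assumes "left_tensorial_c0 \<alpha>"
  shows "is_norm_on (tensor_span c0) \<alpha>" "y \<in> c0 \<Longrightarrow> \<alpha> (tp y x) = norm y * norm x"
    "bounded_op_c0 T \<Longrightarrow> (\<And>i. i < n \<Longrightarrow> ys i \<in> c0) \<Longrightarrow>
       \<alpha> (\<Sum>i<n. tp (T (ys i)) (xs i)) \<le> c0_opnorm T * \<alpha> (\<Sum>i<n. tp (ys i) (xs i))"
  using assms unfolding left_tensorial_c0_def c0_tensor_eq by simp_all

lemma left_tensorial_linfD:
  fixes n :: nat
  assumes "left_tensorial_linf \<gamma>"
  shows "is_norm_on (tensor_span UNIV) \<gamma>" "\<gamma> (tp y x) = norm y * norm x"
    "\<gamma> (\<Sum>i<n. tp (blinfun_apply T (ys i)) (xs i)) \<le> norm T * \<gamma> (\<Sum>i<n. tp (ys i) (xs i))"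
  using assms unfolding left_tensorial_linf_def linf_tensor_eq by simp_all

lemma left_tensorial_c0_op_le:
  fixes n :: nat
  assumes "left_tensorial_c0 \<alpha>" "bounded_linear T" "T ` c0 \<subseteq> c0"
    "\<And>y. norm (T y) \<le> K * norm y" "0 \<le> K" "\<And>i. i < n \<Longrightarrow> ys i \<in> c0"
  shows "\<alpha> (\<Sum>i<n. tp (T (ys i)) (xs i)) \<le> K * \<alpha> (\<Sum>i<n. tp (ys i) (xs i))"
proof -
  have "\<alpha> (\<Sum>i<n. tp (T (ys i)) (xs i)) \<le> c0_opnorm T * \<alpha> (\<Sum>i<n. tp (ys i) (xs i))"
    by (rule left_tensorial_c0D(3)[OF assms(1) bounded_op_c0I[OF assms(2,3)] assms(6)])
  also have "\<dots> \<le> K * \<alpha> (\<Sum>i<n. tp (ys i) (xs i))"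
  proof (rule mult_right_mono)
    show "c0_opnorm T \<le> K"
      by (rule c0_opnorm_le[OF assms(4,5)])
    show "0 \<le> \<alpha> (\<Sum>i<n. tp (ys i) (xs i))"
      by (rule is_norm_onD(1)[OF left_tensorial_c0D(1)[OF assms(1)]])
        (rule sum_tp_in_tensor_span, simp add: assms(6))
  qed
  finally show ?thesis .
qed

lemma left_tensorial_linf_contraction:
  fixes n :: nat
  assumes "left_tensorial_linf \<gamma>" "bounded_linear L" "\<And>y. norm (L y) \<le> norm y"
  shows "\<gamma> (\<Sum>i<n. tp (L (ys i)) (xs i)) \<le> \<gamma> (\<Sum>i<n. tp (ys i) (xs i))"
proof -
  have "norm (Blinfun L) \<le> 1"
    using assms(2,3) by (intro norm_blinfun_bound) (simp_all add: bounded_linear_Blinfun_apply)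
  moreover have "\<gamma> (\<Sum>i<n. tp (L (ys i)) (xs i)) \<le> norm (Blinfun L) * \<gamma> (\<Sum>i<n. tp (ys i) (xs i))"
    using left_tensorial_linfD(3)[OF assms(1), of "Blinfun L"]
    by (simp add: bounded_linear_Blinfun_apply[OF assms(2)])
  moreover have "\<gamma> (\<Sum>i<n. tp (ys i) (xs i)) \<ge> 0"
    by (rule is_norm_onD(1)[OF left_tensorial_linfD(1)[OF assms(1)]]) (simp add: sum_tp_in_tensor_span)
  ultimately show ?thesis
    using mult_right_mono[of "norm (Blinfun L)" 1] by fastforce
qed

definition linf_ext :: "((nat \<Rightarrow>\<^sub>C 'x::real_normed_vector) \<Rightarrow> real) \<Rightarrow> (nat \<Rightarrow>\<^sub>C 'x) \<Rightarrow> real" where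
  "linf_ext \<alpha> u = (SUP N. \<alpha> (trunc N u))"

lemma linf_ext_le: "(\<And>N. \<alpha> (trunc N u) \<le> b) \<Longrightarrow> linf_ext \<alpha> u \<le> b"
  unfolding linf_ext_def by (rule cSUP_least) auto

context
  fixes \<alpha> :: "(nat \<Rightarrow>\<^sub>C 'x::real_normed_vector) \<Rightarrow> real"
  assumes \<alpha>: "left_tensorial_c0 \<alpha>"
begin

lemma bdd_above_trunc:
  assumes "u \<in> linf_tensor"
  shows "bdd_above (range (\<lambda>N. \<alpha> (trunc N u)))"
proof -
  obtain n :: nat and ys xs where u: "u = (\<Sum>i<n. tp (ys i) (xs i))"
    using linf_tensor_obtain_sum_tp[OF assms] .
  have "norm (trunc N (ys i)) \<le> (\<Sum>j<n. norm (ys j))" if "i < n" for i N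
    using norm_trunc_le order_trans member_le_sum[of i "{..<n}" "\<lambda>j. norm (ys j)"] that by fastforce
  then have "\<alpha> (trunc N u) \<le> (\<Sum>j<n. norm (ys j)) * (\<Sum>i<n. norm (xs i))" for N
    unfolding u trunc_sum_tp
    by (intro is_norm_on_sum_tp_le[OF left_tensorial_c0D(1,2)[OF \<alpha>]]) (simp_all add: trunc_in_c0)
  then show ?thesis
    by (intro bdd_aboveI2)
qed

lemma linf_ext_ge: "u \<in> linf_tensor \<Longrightarrow> \<alpha> (trunc N u) \<le> linf_ext \<alpha> u"
  unfolding linf_ext_def by (rule cSUP_upper[OF UNIV_I bdd_above_trunc])

lemma linf_ext_nonneg: "u \<in> linf_tensor \<Longrightarrow> 0 \<le> linf_ext \<alpha> u"
  using linf_ext_ge[of u 0] is_norm_on_zero[OF left_tensorial_c0D(1)[OF \<alpha>] subspace_tensor_span]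
  by (simp add: trunc_0_left)

lemma linf_ext_eq:
  assumes "u \<in> c0_tensor"
  shows "linf_ext \<alpha> u = \<alpha> u"
proof -
  obtain n :: nat and ys xs where ys: "\<And>i. i < n \<Longrightarrow> ys i \<in> c0" and u: "u = (\<Sum>i<n. tp (ys i) (xs i))"
    using tensor_span_obtain_sum_tp[OF subspace_c0] assms c0_tensor_eq by metis
  have "linf_ext \<alpha> u \<le> \<alpha> u"
  proof (rule linf_ext_le)
    fix N
    show "\<alpha> (trunc N u) \<le> \<alpha> u"
      using left_tensorial_c0_op_le[OF \<alpha> bounded_linear_trunc _ _ _ ys, of N 1]
      unfolding u trunc_sum_tp by (simp add: norm_trunc_le trunc_in_c0 image_subset_iff)
  qed
  moreover have "\<alpha> u \<le> linf_ext \<alpha> u"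
  proof (rule le_of_forall_pos_le_add_mult)
    fix \<delta> :: real
    assume "\<delta> > 0"
    have "eventually (\<lambda>N. \<forall>i\<in>{..<n}. norm (ys i - trunc N (ys i)) \<le> \<delta>) sequentially"
      using ys c0_eventually_trunc_close[OF _ \<open>\<delta> > 0\<close>] by (intro eventually_ball_finite) auto
    then obtain N where N: "\<And>i. i < n \<Longrightarrow> norm (ys i - trunc N (ys i)) \<le> \<delta>"
      by (auto simp: eventually_sequentially)
    have "\<alpha> u \<le> \<alpha> (trunc N u) + \<delta> * (\<Sum>i<n. norm (xs i))"
      unfolding u trunc_sum_tp
      by (rule is_norm_on_sum_tp_perturb[OF subspace_c0 left_tensorial_c0D(1,2)[OF \<alpha>]])
        (simp_all add: ys trunc_in_c0 N)
    also have "\<alpha> (trunc N u) \<le> linf_ext \<alpha> u"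
      unfolding u by (rule linf_ext_ge[OF sum_tp_in_linf_tensor])
    finally show "\<alpha> u \<le> linf_ext \<alpha> u + \<delta> * (\<Sum>i<n. norm (xs i))"
      by simp
  qed
  ultimately show ?thesis
    by simp
qed

lemma is_norm_on_c0_tensor: "is_norm_on c0_tensor \<alpha>"
  using left_tensorial_c0D(1)[OF \<alpha>] by (simp add: c0_tensor_eq)

lemma linf_ext_zero: "linf_ext \<alpha> 0 = 0"
  using is_norm_on_zero[OF is_norm_on_c0_tensor]
  by (simp add: linf_ext_def trunc_zero c0_tensor_eq subspace_tensor_span)

lemma linf_ext_eq_0_imp:
  assumes u: "u \<in> linf_tensor" and "linf_ext \<alpha> u = 0"
  shows "u = 0"
proof (rule bcontfun_eqI)
  fix n
  have "\<alpha> (trunc (Suc n) u) = 0"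
    using linf_ext_ge[OF u] is_norm_onD(1)[OF is_norm_on_c0_tensor trunc_in_c0_tensor[OF u]]
      \<open>linf_ext \<alpha> u = 0\<close>
    by (simp add: order_antisym)
  then have "trunc (Suc n) u = 0"
    using is_norm_onD(2)[OF is_norm_on_c0_tensor trunc_in_c0_tensor[OF u]] by simp
  then show "apply_bcontfun u n = apply_bcontfun 0 n"
    using trunc_apply[of "Suc n" u n] by simp
qed

lemma linf_ext_scaleR_le: "u \<in> linf_tensor \<Longrightarrow> linf_ext \<alpha> (c *\<^sub>R u) \<le> \<bar>c\<bar> * linf_ext \<alpha> u"
  by (rule linf_ext_le)
    (simp add: trunc_scaleR is_norm_onD(3)[OF is_norm_on_c0_tensor trunc_in_c0_tensor]
      linf_ext_ge mult_left_mono)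

lemma linf_ext_scaleR:
  assumes u: "u \<in> linf_tensor"
  shows "linf_ext \<alpha> (c *\<^sub>R u) = \<bar>c\<bar> * linf_ext \<alpha> u"
proof (cases "c = 0")
  case True
  then show ?thesis by (simp add: linf_ext_zero)
next
  case False
  have "linf_ext \<alpha> u = linf_ext \<alpha> (inverse c *\<^sub>R (c *\<^sub>R u))"
    using False by simp
  also have "\<dots> \<le> \<bar>inverse c\<bar> * linf_ext \<alpha> (c *\<^sub>R u)"
    using u subspace_scale[OF subspace_tensor_span] by (intro linf_ext_scaleR_le) (simp add: linf_tensor_eq)
  finally have "\<bar>c\<bar> * linf_ext \<alpha> u \<le> linf_ext \<alpha> (c *\<^sub>R u)"
    using False by (simp add: field_simps)
  with linf_ext_scaleR_le[OF u, of c] show ?thesis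
    by linarith
qed

lemma linf_ext_add_le:
  assumes u: "u \<in> linf_tensor" and v: "v \<in> linf_tensor"
  shows "linf_ext \<alpha> (u + v) \<le> linf_ext \<alpha> u + linf_ext \<alpha> v"
proof (rule linf_ext_le)
  fix N
  have "\<alpha> (trunc N (u + v)) \<le> \<alpha> (trunc N u) + \<alpha> (trunc N v)"
    unfolding trunc_add
    by (rule is_norm_onD(4)[OF is_norm_on_c0_tensor trunc_in_c0_tensor[OF u] trunc_in_c0_tensor[OF v]])
  also have "\<dots> \<le> linf_ext \<alpha> u + linf_ext \<alpha> v"
    by (intro add_mono linf_ext_ge u v)
  finally show "\<alpha> (trunc N (u + v)) \<le> linf_ext \<alpha> u + linf_ext \<alpha> v" .
qed

lemma is_norm_on_linf_ext: "is_norm_on linf_tensor (linf_ext \<alpha>)"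
  unfolding is_norm_on_def
  using linf_ext_nonneg linf_ext_eq_0_imp linf_ext_zero linf_ext_scaleR linf_ext_add_le by blast

lemma linf_ext_tp: "linf_ext \<alpha> (tp y x) = norm y * norm x"
proof -
  have \<alpha>_trunc: "\<alpha> (trunc N (tp y x)) = norm (trunc N y) * norm x" for N
    by (simp add: trunc_tp left_tensorial_c0D(2)[OF \<alpha>] trunc_in_c0)
  have tp_mem: "tp y x \<in> linf_tensor"
    by (simp add: linf_tensor_eq tp_in_tensor_span)
  have "linf_ext \<alpha> (tp y x) \<le> norm y * norm x"
    by (rule linf_ext_le) (simp add: \<alpha>_trunc mult_right_mono norm_trunc_le)
  moreover have "norm y * norm x \<le> linf_ext \<alpha> (tp y x)"
  proof (cases "x = 0")
    case True
    then show ?thesis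
      using linf_ext_nonneg[OF tp_mem] by simp
  next
    case False
    have "norm y \<le> linf_ext \<alpha> (tp y x) / norm x"
    proof (rule norm_bound)
      fix n
      have "norm (apply_bcontfun y n) \<le> norm (trunc (Suc n) y)"
        using norm_bounded[of "trunc (Suc n) y" n] by simp
      then have "norm (apply_bcontfun y n) * norm x \<le> \<alpha> (trunc (Suc n) (tp y x))"
        unfolding \<alpha>_trunc by (simp add: mult_right_mono)
      also have "\<dots> \<le> linf_ext \<alpha> (tp y x)"
        by (rule linf_ext_ge[OF tp_mem])
      finally show "norm (apply_bcontfun y n) \<le> linf_ext \<alpha> (tp y x) / norm x"
        using False by (simp add: le_divide_eq)
    qed
    then show ?thesis
      using False by (simp add: le_divide_eq)
  qed
  ultimately show ?thesis
    by simp
qed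

lemma trunc_op_le_approx:
  fixes n :: nat and T :: "linf \<Rightarrow>\<^sub>L linf"
  assumes c: "\<And>k. c k < m" and approx: "\<And>i. i < n \<Longrightarrow> norm (ys i - reindex c (ys i)) \<le> \<delta>"
  shows "\<alpha> (trunc N (\<Sum>i<n. tp (T (ys i)) (xs i)))
    \<le> norm T * \<alpha> (trunc m (\<Sum>i<n. tp (ys i) (xs i))) + \<delta> * (norm T * (\<Sum>i<n. norm (xs i)))"
proof -
  define S where "S y = trunc N (T (reindex c y))" for y
  have S_linear: "bounded_linear S"
    unfolding S_def
    by (intro bounded_linear_compose[OF bounded_linear_trunc]
        bounded_linear_compose[OF blinfun.bounded_linear_right] bounded_linear_reindex)
  have S_norm: "norm (S y) \<le> norm T * norm y" for y
    unfolding S_def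
    using norm_trunc_le norm_blinfun[of T "reindex c y"]
      mult_left_mono[OF norm_reindex_le[of c y] norm_ge_zero[of T]]
    by (meson order_trans)
  have S_in_c0: "S y \<in> c0" for y
    by (simp add: S_def trunc_in_c0)
  have close: "norm (trunc N (T (ys i)) - S (trunc m (ys i))) \<le> norm T * \<delta>" if "i < n" for i
  proof -
    have "trunc N (T (ys i)) - S (trunc m (ys i)) = trunc N (T (ys i - reindex c (ys i)))"
      by (simp add: S_def reindex_trunc c blinfun.diff_right
          linear_diff[OF bounded_linear.linear[OF bounded_linear_trunc]])
    also have "norm \<dots> \<le> norm T * norm (ys i - reindex c (ys i))"
      using norm_trunc_le norm_blinfun order_trans by blast
    also have "\<dots> \<le> norm T * \<delta>"
      by (intro mult_left_mono approx that) simp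
    finally show ?thesis .
  qed
  have "\<alpha> (trunc N (\<Sum>i<n. tp (T (ys i)) (xs i)))
      \<le> \<alpha> (\<Sum>i<n. tp (S (trunc m (ys i))) (xs i)) + norm T * \<delta> * (\<Sum>i<n. norm (xs i))"
    unfolding trunc_sum_tp
    by (rule is_norm_on_sum_tp_perturb[OF subspace_c0 left_tensorial_c0D(1,2)[OF \<alpha>]])
      (simp_all add: trunc_in_c0 S_in_c0 close)
  also have "\<alpha> (\<Sum>i<n. tp (S (trunc m (ys i))) (xs i)) \<le> norm T * \<alpha> (trunc m (\<Sum>i<n. tp (ys i) (xs i)))"
    unfolding trunc_sum_tp
    by (rule left_tensorial_c0_op_le[OF \<alpha> S_linear _ S_norm norm_ge_zero]) (auto simp: S_in_c0 trunc_in_c0)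
  finally show ?thesis
    by (simp add: algebra_simps)
qed

lemma linf_ext_op_le:
  fixes n :: nat and T :: "linf \<Rightarrow>\<^sub>L linf"
  shows "linf_ext \<alpha> (\<Sum>i<n. tp (T (ys i)) (xs i)) \<le> norm T * linf_ext \<alpha> (\<Sum>i<n. tp (ys i) (xs i))"
proof (rule linf_ext_le)
  fix N
  define u where "u = (\<Sum>i<n. tp (ys i) (xs i))"
  show "\<alpha> (trunc N (\<Sum>i<n. tp (T (ys i)) (xs i))) \<le> norm T * linf_ext \<alpha> u"
  proof (rule le_of_forall_pos_le_add_mult)
    fix \<delta> :: real
    assume "\<delta> > 0"
    obtain c m where c: "\<And>k. c k < m" and approx: "\<And>i. i < n \<Longrightarrow> norm (ys i - reindex c (ys i)) \<le> \<delta>"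
      using reindex_approximation[OF \<open>\<delta> > 0\<close>, of n ys] by metis
    have "\<alpha> (trunc N (\<Sum>i<n. tp (T (ys i)) (xs i)))
        \<le> norm T * \<alpha> (trunc m u) + \<delta> * (norm T * (\<Sum>i<n. norm (xs i)))"
      unfolding u_def by (rule trunc_op_le_approx[OF c approx])
    also have "norm T * \<alpha> (trunc m u) \<le> norm T * linf_ext \<alpha> u"
      unfolding u_def by (intro mult_left_mono linf_ext_ge sum_tp_in_linf_tensor norm_ge_zero)
    finally show "\<alpha> (trunc N (\<Sum>i<n. tp (T (ys i)) (xs i)))
        \<le> norm T * linf_ext \<alpha> u + \<delta> * (norm T * (\<Sum>i<n. norm (xs i)))"
      by simp
  qed
qed

lemma left_tensorial_linf_linf_ext: "left_tensorial_linf (linf_ext \<alpha>)"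
  unfolding left_tensorial_linf_def using is_norm_on_linf_ext linf_ext_tp linf_ext_op_le by blast

lemma linf_ext_unique:
  assumes \<gamma>: "left_tensorial_linf \<gamma>" and agree: "\<And>v. v \<in> c0_tensor \<Longrightarrow> \<gamma> v = \<alpha> v"
    and u: "u \<in> linf_tensor"
  shows "\<gamma> u = linf_ext \<alpha> u"
proof -
  obtain n :: nat and ys xs where u_eq: "u = (\<Sum>i<n. tp (ys i) (xs i))"
    using linf_tensor_obtain_sum_tp[OF u] .
  have "\<gamma> (trunc N u) \<le> \<gamma> u" for N
    unfolding u_eq trunc_sum_tp
    by (rule left_tensorial_linf_contraction[OF \<gamma> bounded_linear_trunc norm_trunc_le])
  then have "linf_ext \<alpha> u \<le> \<gamma> u"
    by (intro linf_ext_le) (simp add: agree[OF trunc_in_c0_tensor[OF u], symmetric])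
  moreover have "\<gamma> u \<le> linf_ext \<alpha> u"
  proof (rule le_of_forall_pos_le_add_mult)
    fix \<delta> :: real
    assume "\<delta> > 0"
    obtain c m where c: "\<And>k. c k < m" and approx: "\<And>i. i < n \<Longrightarrow> norm (ys i - reindex c (ys i)) \<le> \<delta>"
      using reindex_approximation[OF \<open>\<delta> > 0\<close>, of n ys] by metis
    have "\<gamma> u \<le> \<gamma> (\<Sum>i<n. tp (reindex c (trunc m (ys i))) (xs i)) + \<delta> * (\<Sum>i<n. norm (xs i))"
      unfolding u_eq
      by (rule is_norm_on_sum_tp_perturb[OF subspace_UNIV left_tensorial_linfD(1)[OF \<gamma>]])
        (simp_all add: left_tensorial_linfD(2)[OF \<gamma>] reindex_trunc c approx)
    also have "\<gamma> (\<Sum>i<n. tp (reindex c (trunc m (ys i))) (xs i)) \<le> \<gamma> (trunc m u)"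
      unfolding u_eq trunc_sum_tp
      by (rule left_tensorial_linf_contraction[OF \<gamma> bounded_linear_reindex norm_reindex_le])
    also have "\<gamma> (trunc m u) = \<alpha> (trunc m u)"
      by (rule agree[OF trunc_in_c0_tensor[OF u]])
    also have "\<dots> \<le> linf_ext \<alpha> u"
      by (rule linf_ext_ge[OF u])
    finally show "\<gamma> u \<le> linf_ext \<alpha> u + \<delta> * (\<Sum>i<n. norm (xs i))"
      by simp
  qed
  ultimately show ?thesis
    by simp
qed

end

theorem proposition1p3:
  fixes \<alpha> :: "(nat \<Rightarrow>\<^sub>C 'x::banach) \<Rightarrow> real"
  assumes "left_tensorial_c0 \<alpha>"
  shows "\<exists>\<beta>. left_tensorial_linf \<beta> \<and> (\<forall>u\<in>c0_tensor. \<beta> u = \<alpha> u) \<and>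
           (\<forall>\<gamma>. left_tensorial_linf \<gamma> \<and> (\<forall>u\<in>c0_tensor. \<gamma> u = \<alpha> u) \<longrightarrow>
                 (\<forall>u\<in>linf_tensor. \<gamma> u = \<beta> u))"
proof (intro exI[of _ "linf_ext \<alpha>"] conjI allI impI ballI)
  show "left_tensorial_linf (linf_ext \<alpha>)"
    by (rule left_tensorial_linf_linf_ext[OF assms])
  show "linf_ext \<alpha> u = \<alpha> u" if "u \<in> c0_tensor" for u
    by (rule linf_ext_eq[OF assms that])
  show "\<gamma> u = linf_ext \<alpha> u"
    if "left_tensorial_linf \<gamma> \<and> (\<forall>u\<in>c0_tensor. \<gamma> u = \<alpha> u)" and "u \<in> linf_tensor" for \<gamma> u
    using linf_ext_unique[OF assms] that by blast
qed

end
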